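(* Let $a_1,\dots,a_s$ be nonnegative integers. Then for arbitrary integers $k_1,\dots,k_s$ with $1\le k_i\le a_1+\cdots+a_s-1$ for all $i$, either $1\le k_i\le a_i-1$ for some $i$, or $1-a_j\le k_i-k_j\le a_i-1$ for some $i<j$. *)

theory Defs
  imports Main
begin

end

theory Submission
  imports Defs
begin

text \<open>If both alternatives fail, the windows \<open>{k i - a i + 1..k i}\<close> of lengths \<open>a i\<close> all lie
  in \<open>{1..a 1 + \<dots> + a s - 1}\<close> and are pairwise disjoint, so their total length
  \<open>a 1 + \<dots> + a s\<close> cannot exceed \<open>a 1 + \<dots> + a s - 1\<close>.\<close>

lemma sum_card_le_card_if_disjoint:
  assumes "finite I" "finite T" "\<forall>i\<in>I. S i \<subseteq> T"
    and "\<forall>i\<in>I. \<forall>j\<in>I. i \<noteq> j \<longrightarrow> S i \<inter> S j = {}"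
  shows "(\<Sum>i\<in>I. card (S i)) \<le> card T"
proof -
  have "(\<Sum>i\<in>I. card (S i)) = card (\<Union>i\<in>I. S i)"
    using assms by (intro card_UN_disjoint [symmetric]) (auto intro: finite_subset)
  also have "\<dots> \<le> card T"
    using assms by (intro card_mono) auto
  finally show ?thesis .
qed

lemma int_intervals_disjoint:
  fixes x y a b :: int
  assumes "\<not> (1 - b \<le> x - y \<and> x - y \<le> a - 1)"
  shows "{x - a + 1..x} \<inter> {y - b + 1..y} = {}"
  using assms by auto

lemma sum_le_if_disjoint_int_windows:
  fixes a k :: "'i \<Rightarrow> int" and M :: int
  assumes "finite I" "0 \<le> M"
    and windows_inside: "\<forall>i\<in>I. 0 \<le> a i \<and> a i \<le> k i \<and> k i \<le> M"
    and "\<forall>i\<in>I. \<forall>j\<in>I. i \<noteq> j \<longrightarrow> {k i - a i + 1..k i} \<inter> {k j - a j + 1..k j} = {}"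
  shows "(\<Sum>i\<in>I. a i) \<le> M"
proof -
  have "(\<Sum>i\<in>I. card {k i - a i + 1..k i}) \<le> card {1..M}"
    using assms by (intro sum_card_le_card_if_disjoint) auto
  then have card_bound: "(\<Sum>i\<in>I. nat (a i)) \<le> nat M"
    by simp
  have "(\<Sum>i\<in>I. a i) = int (\<Sum>i\<in>I. nat (a i))"
    using windows_inside by (auto simp: of_nat_sum intro!: sum.cong)
  also have "\<dots> \<le> M"
    using card_bound \<open>0 \<le> M\<close> by linarith
  finally show ?thesis .
qed

theorem mainTheorem6:
  fixes s :: nat and a k :: "nat \<Rightarrow> int"
  assumes "s \<ge> 1"
    and "\<forall>i\<in>{1..s}. a i \<ge> 0"
    and "\<forall>i\<in>{1..s}. 1 \<le> k i \<and> k i \<le> (\<Sum>j=1..s. a j) - 1"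
  shows "(\<exists>i\<in>{1..s}. 1 \<le> k i \<and> k i \<le> a i - 1)
       \<or> (\<exists>i\<in>{1..s}. \<exists>j\<in>{1..s}. i < j \<and> 1 - a j \<le> k i - k j \<and> k i - k j \<le> a i - 1)"
proof (rule ccontr)
  assume neg: "\<not> ?thesis"
  define N where "N = (\<Sum>j=1..s. a j)"
  have windows_inside: "\<forall>i\<in>{1..s}. 0 \<le> a i \<and> a i \<le> k i \<and> k i \<le> N - 1"
  proof
    fix i assume i: "i \<in> {1..s}"
    then have "\<not> (1 \<le> k i \<and> k i \<le> a i - 1)"
      using neg by blast
    moreover have "0 \<le> a i" "1 \<le> k i" "k i \<le> N - 1"
      using i assms(2,3) unfolding N_def by auto
    ultimately show "0 \<le> a i \<and> a i \<le> k i \<and> k i \<le> N - 1"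
      by linarith
  qed
  have windows_disjoint:
    "\<forall>i\<in>{1..s}. \<forall>j\<in>{1..s}. i \<noteq> j \<longrightarrow> {k i - a i + 1..k i} \<inter> {k j - a j + 1..k j} = {}"
  proof (intro ballI impI)
    fix i j assume "i \<in> {1..s}" "j \<in> {1..s}" "i \<noteq> j"
    then consider "i < j" | "j < i" by linarith
    then show "{k i - a i + 1..k i} \<inter> {k j - a j + 1..k j} = {}"
      by cases (use neg \<open>i \<in> {1..s}\<close> \<open>j \<in> {1..s}\<close> int_intervals_disjoint in \<open>blast+\<close>)
  qed
  have "1 \<in> {1..s}"
    using assms(1) by simp
  then have "0 \<le> N - 1"
    using windows_inside by fastforce
  then have "N \<le> N - 1"
    using windows_inside windows_disjoint unfolding N_def
    by (intro sum_le_if_disjoint_int_windows) auto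
  then show False
    by simp
qed

end
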